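(* Let $g,h$ be non-identical monotone linear functions. Then: (i) $\theta(h)-\theta(g)\in(0,\pi)_{2\pi}$ $\iff$ $\theta(h\circ g)\in(\theta(g),\theta(h))_{2\pi}$ $\iff$ $\theta(g\circ h)\in(\theta(g),\theta(h))_{2\pi}$. (ii) $\theta(h)-\theta(g)\in\{0,\pi\}_{2\pi}$ $\iff$ $\theta(h\circ g)\in\{\theta(g),\theta(h),\bot\}$ $\iff$ $\theta(g\circ h)\in\{\theta(g),\theta(h),\bot\}$. (iii) If $\theta(h)=\theta(g)$ then $\theta(h\circ g)=\theta(g\circ h)=\theta(h)$. (iv) $\theta(h\circ g)=\bot\iff\theta(g\circ h)=\bot$, and either of these implies $\theta(h)-\theta(g)=_{2\pi}\pi$.
   Context: A linear function is $f(x)=ax+b$, $a,b\in\mathbb{R}$; it is monotone if $a>0$ and identical if $f(x)=x$. The vector of $f$ is $\vec f=(b,1-a)^\top$ and $\theta(f)\in[0,2\pi)$ is its polar angle, with $\theta(f)=\bot$ if $\vec f=0$. $\theta_1=_{2\pi}\theta_2$ means $\theta_1-\theta_2\in2\pi\mathbb{Z}$; $(\theta_1,\theta_2)_{2\pi}=\{\theta\in(\lambda_1,\lambda_2)\mid\lambda_1=_{2\pi}\theta_1,\lambda_2=_{2\pi}\theta_2,\lambda_2-\lambda_1\in[0,2\pi)\}$; for a set $S$, $S_{2\pi}=\{\theta\mid\theta=_{2\pi}\lambda,\ \lambda\in S\}$. *)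

theory Defs
  imports Complex_Main
begin

definition linear_fun :: "(real \<Rightarrow> real) \<Rightarrow> bool" where
  "linear_fun f \<longleftrightarrow> (\<exists>a b. f = (\<lambda>x. a * x + b))"

definition monotone_linear :: "(real \<Rightarrow> real) \<Rightarrow> bool" where
  "monotone_linear f \<longleftrightarrow> (\<exists>a b. a > 0 \<and> f = (\<lambda>x. a * x + b))"

definition identical :: "(real \<Rightarrow> real) \<Rightarrow> bool" where
  "identical f \<longleftrightarrow> (\<forall>x. f x = x)"

definition lin_slope :: "(real \<Rightarrow> real) \<Rightarrow> real" where
  "lin_slope f = f 1 - f 0"

definition lin_icpt :: "(real \<Rightarrow> real) \<Rightarrow> real" where
  "lin_icpt f = f 0"

definition lin_vec :: "(real \<Rightarrow> real) \<Rightarrow> real \<times> real" where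
  "lin_vec f = (lin_icpt f, 1 - lin_slope f)"

definition polar_angle :: "real \<times> real \<Rightarrow> real" where
  "polar_angle v = (THE t. 0 \<le> t \<and> t < 2 * pi \<and>
      fst v = sqrt (fst v ^ 2 + snd v ^ 2) * cos t \<and>
      snd v = sqrt (fst v ^ 2 + snd v ^ 2) * sin t)"

text \<open>theta f; None plays the role of bottom (vector of f is zero).\<close>
definition theta :: "(real \<Rightarrow> real) \<Rightarrow> real option" where
  "theta f = (if lin_vec f = (0, 0) then None else Some (polar_angle (lin_vec f)))"

definition eq2pi :: "real \<Rightarrow> real \<Rightarrow> bool" where
  "eq2pi x y \<longleftrightarrow> (\<exists>k::int. x - y = 2 * pi * of_int k)"

definition arc2pi :: "real \<Rightarrow> real \<Rightarrow> real set" where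
  "arc2pi t1 t2 = {t. \<exists>l1 l2. eq2pi l1 t1 \<and> eq2pi l2 t2 \<and> 0 \<le> l2 - l1 \<and> l2 - l1 < 2 * pi
                         \<and> l1 < t \<and> t < l2}"

definition set2pi :: "real set \<Rightarrow> real set" where
  "set2pi S = {t. \<exists>l\<in>S. eq2pi t l}"

end

theory Submission
  imports Defs "HOL-Analysis.Product_Vector"
begin

text \<open>
  Composition acts on the vectors of linear functions by
  \<open>vec (h \<circ> g) = slope h \<cdot> vec g + vec h\<close>, so for monotone \<open>g, h\<close> both
  \<open>vec (h \<circ> g)\<close> and \<open>vec (g \<circ> h)\<close> are combinations \<open>w = m u + n v\<close> of
  \<open>u = vec g\<close> and \<open>v = vec h\<close> with \<open>m, n > 0\<close>. For such \<open>w\<close> the cross products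
  satisfy \<open>u \<times> w = n (u \<times> v)\<close> and \<open>w \<times> v = m (u \<times> v)\<close>, while
  \<open>u \<times> v = |u| |v| sin (\<theta> v - \<theta> u)\<close>; hence the angle of \<open>w\<close> lies strictly between
  those of \<open>u\<close> and \<open>v\<close> exactly when \<open>\<theta> v - \<theta> u\<close> is in \<open>(0, \<pi>)\<close> mod \<open>2\<pi>\<close>, and \<open>w\<close> is
  parallel to \<open>u\<close> or \<open>v\<close> (or zero) exactly when the difference is \<open>0\<close> or \<open>\<pi>\<close>.
  Finally \<open>vec (h \<circ> g) = 0\<close> means \<open>h \<circ> g = id\<close>, which for bijections is symmetric in \<open>g, h\<close>.
\<close>

section \<open>Polar angles\<close>

lemma polar_angle_unique:
  assumes "0 \<le> t" "t < 2*pi" "0 \<le> t'" "t' < 2*pi" "cos t = cos t'" "sin t = sin t'"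
  shows "t = t'"
proof -
  obtain n :: int where n: "t = t' + 2*pi*n" using sin_cos_eq_iff assms(5,6) by metis
  with assms(1-4) have "2*pi*n < 2*pi*1" "2*pi*(-1) < 2*pi*n" by linarith+
  then have "real_of_int n < 1" "-1 < real_of_int n"
    by (metis mult_less_cancel_left_pos pi_gt_zero mult_pos_pos zero_less_numeral)+
  then have "n = 0" by linarith
  with n show ?thesis by simp
qed

lemma polar_angle_polar:
  assumes "r > 0" "0 \<le> t" "t < 2*pi"
  shows "polar_angle (r * cos t, r * sin t) = t"
proof -
  have "(r * cos t)^2 + (r * sin t)^2 = r^2 * ((sin t)^2 + (cos t)^2)"
    by (simp only: distrib_left power_mult_distrib add.commute)
  with assms(1) have norm: "sqrt ((r * cos t)^2 + (r * sin t)^2) = r" by simp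
  show ?thesis unfolding polar_angle_def fst_conv snd_conv norm
  proof (rule the_equality)
    fix t' assume "0 \<le> t' \<and> t' < 2*pi \<and> r * cos t = r * cos t' \<and> r * sin t = r * sin t'"
    with assms show "t' = t" using polar_angle_unique[of t' t] by auto
  qed (use assms in simp)
qed

lemma polar_decomposition:
  fixes u :: "real \<times> real"
  assumes "u \<noteq> 0"
  shows "\<exists>r>0. u = r *\<^sub>R (cos (polar_angle u), sin (polar_angle u))"
    and "0 \<le> polar_angle u" "polar_angle u < 2*pi"
proof -
  obtain x y where u: "u = (x, y)" by fastforce
  define r where "r = sqrt (x^2 + y^2)"
  have "x \<noteq> 0 \<or> y \<noteq> 0" using assms u by (auto simp: zero_prod_def)
  then have "x^2 + y^2 > 0" by (simp add: sum_power2_gt_zero_iff)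
  then have r: "r > 0" "r^2 = x^2 + y^2" unfolding r_def by auto
  then have "(x/r)^2 + (y/r)^2 = 1" using \<open>x \<noteq> 0 \<or> y \<noteq> 0\<close>
    by (simp add: power_divide flip: add_divide_distrib)
  then obtain t where t: "0 \<le> t" "t < 2*pi" "x/r = cos t" "y/r = sin t" by (rule sincos_total_2pi)
  then have xy: "x = r * cos t" "y = r * sin t" using r by (auto simp: field_simps)
  then have "polar_angle u = t" using polar_angle_polar[OF r(1) t(1,2)] u by simp
  with xy r t u show "\<exists>r>0. u = r *\<^sub>R (cos (polar_angle u), sin (polar_angle u))"
    "0 \<le> polar_angle u" "polar_angle u < 2*pi" by auto
qed

lemma polar_angle_scaleR:
  fixes u :: "real \<times> real"
  assumes "k > 0" "u \<noteq> 0"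
  shows "polar_angle (k *\<^sub>R u) = polar_angle u"
proof -
  obtain r where "r > 0" "u = r *\<^sub>R (cos (polar_angle u), sin (polar_angle u))"
    using polar_decomposition(1)[OF assms(2)] by blast
  moreover have "polar_angle ((k*r) * cos (polar_angle u), (k*r) * sin (polar_angle u)) = polar_angle u"
    using \<open>r > 0\<close> assms polar_decomposition(2,3) by (intro polar_angle_polar) auto
  ultimately show ?thesis by (metis scaleR_Pair scaleR_scaleR real_scaleR_def)
qed

lemma polar_angle_uminus:
  fixes u :: "real \<times> real"
  assumes "u \<noteq> 0"
  shows "eq2pi (polar_angle (- u) - polar_angle u) pi"
proof -
  define a where "a = polar_angle u"
  obtain r where r: "r > 0" "u = (r * cos a, r * sin a)"
    using polar_decomposition(1)[OF assms] unfolding a_def by auto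
  have a: "0 \<le> a" "a < 2*pi" using polar_decomposition(2,3)[OF assms] unfolding a_def by auto
  show ?thesis
  proof (cases "a < pi")
    case True
    with r a have "polar_angle (r * cos (a + pi), r * sin (a + pi)) = a + pi"
      by (intro polar_angle_polar) auto
    with r show ?thesis unfolding eq2pi_def a_def[symmetric] by (intro exI[of _ 0]) simp
  next
    case False
    with r a have "polar_angle (r * cos (a - pi), r * sin (a - pi)) = a - pi"
      by (intro polar_angle_polar) auto
    with r show ?thesis unfolding eq2pi_def a_def[symmetric]
      by (intro exI[of _ "-1"]) (simp add: sin_diff cos_diff)
  qed
qed

section \<open>Arcs of the circle\<close>

lemma sin_add_2pi_int: "sin (x + 2*pi*of_int k) = sin x"
  by (simp add: sin_add)

lemma sin_pos_imp_in_0_pi_mod_2pi: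
  assumes "sin x > 0"
  obtains k :: int where "0 < x - 2*pi*k" "x - 2*pi*k < pi"
proof -
  define k where "k = \<lfloor>x / (2*pi)\<rfloor>"
  define u where "u = x - 2*pi*k"
  have "k \<le> x / (2*pi)" "x / (2*pi) < k + 1" unfolding k_def by linarith+
  then have "0 \<le> u" "u < 2*pi" unfolding u_def by (simp_all add: field_simps)
  moreover have "sin u = sin x" unfolding u_def by (simp add: sin_diff)
  ultimately have "0 < u" "\<not> pi \<le> u" using assms sin_le_zero[of u] by (auto simp: le_less)
  then have "0 < u" "u < pi" by simp_all
  with that show ?thesis unfolding u_def by blast
qed

lemma in_arc2pi_if_sin_pos:
  assumes "sin (t - a) > 0" "sin (b - t) > 0"
  shows "t \<in> arc2pi a b"
proof -
  obtain k1 :: int where k1: "0 < t - a - 2*pi*k1" "t - a - 2*pi*k1 < pi"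
    using sin_pos_imp_in_0_pi_mod_2pi[OF assms(1)] .
  obtain k2 :: int where k2: "0 < b - t - 2*pi*k2" "b - t - 2*pi*k2 < pi"
    using sin_pos_imp_in_0_pi_mod_2pi[OF assms(2)] .
  have "eq2pi (a + 2*pi*k1) a" "eq2pi (b - 2*pi*k2) b"
    unfolding eq2pi_def by (auto intro!: exI[of _ k1] exI[of _ "-k2"])
  with k1 k2 show ?thesis unfolding arc2pi_def
    by (intro CollectI exI[of _ "a + 2*pi*k1"] exI[of _ "b - 2*pi*k2"]) auto
qed

lemma sin_pos_if_in_arc2pi:
  assumes "t \<in> arc2pi a b"
  shows "sin (t - a) > 0 \<or> sin (b - t) > 0"
proof -
  obtain l1 l2 k1 k2 where l: "l1 - a = 2*pi*of_int k1" "l2 - b = 2*pi*of_int k2"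
    "l2 - l1 < 2*pi" "l1 < t" "t < l2"
    using assms unfolding arc2pi_def eq2pi_def by blast
  have "t - a = (t - l1) + 2*pi*of_int k1" "b - t = (l2 - t) + 2*pi*of_int (-k2)"
    using l(1,2) by simp_all
  then have "sin (t - a) = sin (t - l1)" "sin (b - t) = sin (l2 - t)" by (simp_all only: sin_add_2pi_int)
  moreover have "t - l1 < pi \<or> l2 - t < pi" using l(3) by linarith
  ultimately show ?thesis using l(4,5) sin_gt_zero by auto
qed

lemma arc2pi_0_pi_iff_sin_pos: "t \<in> arc2pi 0 pi \<longleftrightarrow> sin t > 0"
  using in_arc2pi_if_sin_pos[of t 0 pi] sin_pos_if_in_arc2pi[of t 0 pi] by auto

lemma set2pi_0_pi_iff_sin_eq_0: "t \<in> set2pi {0, pi} \<longleftrightarrow> sin t = 0"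
proof
  assume "t \<in> set2pi {0, pi}"
  then obtain k :: int where "t = 2*pi*k \<or> t = 2*pi*k + pi"
    unfolding set2pi_def eq2pi_def by (auto simp: algebra_simps)
  then show "sin t = 0" by (auto simp: sin_add)
next
  assume "sin t = 0"
  then obtain i :: int where i: "t = of_int i * pi" using sin_zero_iff_int2 by blast
  obtain j where "i = 2*j \<or> i = 2*j + 1" by (metis evenE oddE)
  with i show "t \<in> set2pi {0, pi}"
    unfolding set2pi_def eq2pi_def by (auto intro!: exI[of _ j] simp: algebra_simps)
qed

section \<open>Cross product and positive combinations\<close>

definition cross :: "real \<times> real \<Rightarrow> real \<times> real \<Rightarrow> real" where
  "cross u v = fst u * snd v - snd u * fst v"

lemma cross_polar_angle:
  assumes "u \<noteq> 0" "v \<noteq> 0"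
  obtains p where "p > 0" "cross u v = p * sin (polar_angle v - polar_angle u)"
proof -
  obtain r where "r > 0" and u: "u = r *\<^sub>R (cos (polar_angle u), sin (polar_angle u))"
    using polar_decomposition(1)[OF assms(1)] by blast
  obtain r' where "r' > 0" and v: "v = r' *\<^sub>R (cos (polar_angle v), sin (polar_angle v))"
    using polar_decomposition(1)[OF assms(2)] by blast
  have "cross u v = (r * r') * sin (polar_angle v - polar_angle u)"
    by (subst u, subst v) (simp add: cross_def sin_diff algebra_simps)
  with \<open>r > 0\<close> \<open>r' > 0\<close> show ?thesis by (intro that[of "r * r'"]) simp_all
qed

lemma
  assumes "u \<noteq> 0" "v \<noteq> 0"
  shows zero_less_cross_iff: "0 < cross u v \<longleftrightarrow> 0 < sin (polar_angle v - polar_angle u)"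
    and cross_eq_0_iff: "cross u v = 0 \<longleftrightarrow> sin (polar_angle v - polar_angle u) = 0"
  by (rule cross_polar_angle[OF assms], simp add: zero_less_mult_iff)+

lemma cross_eq_0_imp_parallel:
  assumes "u \<noteq> 0" "cross u v = 0"
  obtains l where "v = l *\<^sub>R u"
proof (cases "fst u = 0")
  case True
  with assms have "snd u \<noteq> 0" "fst v = 0" by (auto simp: cross_def prod_eq_iff)
  with True that[of "snd v / snd u"] show ?thesis by (simp add: prod_eq_iff)
next
  case False
  with assms have "snd v = fst v / fst u * snd u" by (simp add: cross_def field_simps)
  with False that[of "fst v / fst u"] show ?thesis by (simp add: prod_eq_iff)
qed

lemma cross_zero_right [simp]: "cross u 0 = 0"
  by (simp add: cross_def)

lemma cross_pos_comb_left: "cross u (m *\<^sub>R u + n *\<^sub>R v) = n * cross u v"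
  and cross_pos_comb_right: "cross (m *\<^sub>R u + n *\<^sub>R v) v = m * cross u v"
  by (simp_all add: cross_def algebra_simps)

definition vec_theta :: "real \<times> real \<Rightarrow> real option" where
  "vec_theta v = (if v = 0 then None else Some (polar_angle v))"

lemma theta_eq_vec_theta: "theta f = vec_theta (lin_vec f)"
  by (simp add: theta_def vec_theta_def zero_prod_def)

lemma vec_theta_scaleR_pos: "k > 0 \<Longrightarrow> vec_theta (k *\<^sub>R u) = vec_theta u"
  by (simp add: vec_theta_def polar_angle_scaleR)

context
  fixes u v :: "real \<times> real" and m n :: real
  assumes u: "u \<noteq> 0" and v: "v \<noteq> 0" and m: "m > 0" and n: "n > 0"
begin

lemma vec_theta_pos_comb_in_arc_iff:
  "(\<exists>t. vec_theta (m *\<^sub>R u + n *\<^sub>R v) = Some t \<and> t \<in> arc2pi (polar_angle u) (polar_angle v))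
    \<longleftrightarrow> 0 < cross u v"
  (is "(\<exists>t. vec_theta ?w = Some t \<and> _) \<longleftrightarrow> _")
proof
  assume "\<exists>t. vec_theta ?w = Some t \<and> t \<in> arc2pi (polar_angle u) (polar_angle v)"
  then have w: "?w \<noteq> 0" and arc: "polar_angle ?w \<in> arc2pi (polar_angle u) (polar_angle v)"
    by (auto simp: vec_theta_def split: if_splits)
  from sin_pos_if_in_arc2pi[OF arc] have "0 < cross u ?w \<or> 0 < cross ?w v"
    using zero_less_cross_iff[OF u w] zero_less_cross_iff[OF w v] by blast
  with m n show "0 < cross u v"
    by (auto simp: cross_pos_comb_left cross_pos_comb_right zero_less_mult_iff)
next
  assume "0 < cross u v"
  with m n have "0 < cross u ?w" "0 < cross ?w v"
    by (simp_all add: cross_pos_comb_left cross_pos_comb_right)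
  moreover from this have w: "?w \<noteq> 0" by auto
  ultimately have "polar_angle ?w \<in> arc2pi (polar_angle u) (polar_angle v)"
    using zero_less_cross_iff[OF u w] zero_less_cross_iff[OF w v] by (simp add: in_arc2pi_if_sin_pos)
  with w show "\<exists>t. vec_theta ?w = Some t \<and> t \<in> arc2pi (polar_angle u) (polar_angle v)"
    by (simp add: vec_theta_def)
qed

lemma vec_theta_pos_comb_parallel:
  assumes "v = l *\<^sub>R u"
  shows "vec_theta (m *\<^sub>R u + n *\<^sub>R v) \<in> {vec_theta u, vec_theta v, None}"
proof -
  have w: "m *\<^sub>R u + n *\<^sub>R v = (m + n * l) *\<^sub>R u" using assms by (simp add: algebra_simps)
  consider "m + n * l > 0" | "m + n * l = 0" | "m + n * l < 0" by linarith
  then show ?thesis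
  proof cases
    case 1
    then show ?thesis by (simp add: w vec_theta_scaleR_pos)
  next
    case 2
    then show ?thesis by (simp add: w vec_theta_def)
  next
    case 3
    with m n have "l < 0" by (smt (verit) mult_nonneg_nonneg)
    with assms w have "m *\<^sub>R u + n *\<^sub>R v = ((m + n * l) / l) *\<^sub>R v" by simp
    moreover from 3 \<open>l < 0\<close> have "(m + n * l) / l > 0" by (simp add: divide_neg_neg)
    ultimately show ?thesis by (simp add: vec_theta_scaleR_pos)
  qed
qed

lemma vec_theta_pos_comb_degenerate_iff:
  "vec_theta (m *\<^sub>R u + n *\<^sub>R v) \<in> {vec_theta u, vec_theta v, None} \<longleftrightarrow> cross u v = 0"
  (is "vec_theta ?w \<in> _ \<longleftrightarrow> _")
proof
  assume degenerate: "vec_theta ?w \<in> {vec_theta u, vec_theta v, None}"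
  show "cross u v = 0"
  proof (rule ccontr)
    assume "cross u v \<noteq> 0"
    with n have "cross u ?w \<noteq> 0" by (simp add: cross_pos_comb_left)
    moreover from this have w: "?w \<noteq> 0" by auto
    moreover from \<open>cross u v \<noteq> 0\<close> m have "cross ?w v \<noteq> 0" by (simp add: cross_pos_comb_right)
    moreover from degenerate w u v have "polar_angle ?w = polar_angle u \<or> polar_angle ?w = polar_angle v"
      by (auto simp: vec_theta_def)
    ultimately show False using cross_eq_0_iff[OF u w] cross_eq_0_iff[OF w v] by auto
  qed
next
  assume "cross u v = 0"
  then obtain l where "v = l *\<^sub>R u" using cross_eq_0_imp_parallel[OF u] by blast
  then show "vec_theta ?w \<in> {vec_theta u, vec_theta v, None}" by (rule vec_theta_pos_comb_parallel)
qed

lemma vec_theta_pos_comb_same_angle: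
  assumes "polar_angle u = polar_angle v"
  shows "vec_theta (m *\<^sub>R u + n *\<^sub>R v) = vec_theta u"
proof -
  define e where "e = (cos (polar_angle u), sin (polar_angle u))"
  obtain r where "r > 0" and ue: "u = r *\<^sub>R e"
    using polar_decomposition(1)[OF u] unfolding e_def by blast
  obtain r' where "r' > 0" and ve: "v = r' *\<^sub>R e"
    using polar_decomposition(1)[OF v] assms unfolding e_def by auto
  have "vec_theta (m *\<^sub>R u + n *\<^sub>R v) = vec_theta ((m * r + n * r') *\<^sub>R e)"
    by (simp add: ue ve scaleR_add_left)
  also have "\<dots> = vec_theta e"
    using m n \<open>r > 0\<close> \<open>r' > 0\<close> by (intro vec_theta_scaleR_pos) (simp add: add_pos_pos)
  also have "\<dots> = vec_theta u"
    using \<open>r > 0\<close> by (simp add: ue vec_theta_scaleR_pos)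
  finally show ?thesis .
qed

end

section \<open>Vectors of linear functions\<close>

lemma linear_fun_lin_coeffs: "linear_fun f \<Longrightarrow> f = (\<lambda>x. lin_slope f * x + lin_icpt f)"
  by (auto simp: linear_fun_def lin_slope_def lin_icpt_def)

lemma linear_fun_comp:
  assumes "linear_fun g" "linear_fun h"
  shows "linear_fun (h \<circ> g)"
proof -
  obtain a b c d where "g = (\<lambda>x. a * x + b)" "h = (\<lambda>x. c * x + d)"
    using assms unfolding linear_fun_def by blast
  then have "h \<circ> g = (\<lambda>x. (c * a) * x + (c * b + d))" by (auto simp: algebra_simps)
  then show ?thesis unfolding linear_fun_def by blast
qed

lemma monotone_linear_iff: "monotone_linear f \<longleftrightarrow> linear_fun f \<and> lin_slope f > 0"
  by (auto simp: monotone_linear_def linear_fun_def lin_slope_def)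

lemma lin_vec_comp:
  assumes "linear_fun g" "linear_fun h"
  shows "lin_vec (h \<circ> g) = lin_slope h *\<^sub>R lin_vec g + lin_vec h"
  by (subst (1 2) linear_fun_lin_coeffs[OF assms(1)], subst (1 2) linear_fun_lin_coeffs[OF assms(2)])
    (simp add: lin_vec_def lin_slope_def lin_icpt_def algebra_simps)

lemma lin_vec_eq_0_iff:
  assumes "linear_fun f"
  shows "lin_vec f = 0 \<longleftrightarrow> identical f"
proof -
  obtain a b where f: "f = (\<lambda>x. a * x + b)" using assms unfolding linear_fun_def by blast
  have "identical f \<longleftrightarrow> a = 1 \<and> b = 0"
  proof
    assume "identical f"
    then have "f 0 = 0" "f 1 = 1" by (simp_all add: identical_def)
    then show "a = 1 \<and> b = 0" by (simp add: f)
  qed (simp add: f identical_def)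
  then show ?thesis by (auto simp: f lin_vec_def lin_slope_def lin_icpt_def zero_prod_def)
qed

lemma theta_eq_None_iff: "linear_fun f \<Longrightarrow> theta f = None \<longleftrightarrow> identical f"
  by (simp add: theta_eq_vec_theta vec_theta_def lin_vec_eq_0_iff)

lemma surj_monotone_linear:
  assumes "monotone_linear f"
  shows "surj f"
proof -
  obtain a b where "a > 0" "f = (\<lambda>x. a * x + b)" using assms unfolding monotone_linear_def by blast
  then show ?thesis by (intro surjI[of _ "\<lambda>y. (y - b) / a"]) simp
qed

lemma identical_comp_swap:
  assumes "surj g" "identical (h \<circ> g)"
  shows "identical (g \<circ> h)"
  unfolding identical_def
proof
  fix y
  obtain x where "y = g x" using assms(1) by blast
  with assms(2) show "(g \<circ> h) y = y" by (simp add: identical_def)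
qed

lemma theta_comp_eq_None_swap:
  assumes "monotone_linear g" "monotone_linear h"
  shows "theta (h \<circ> g) = None \<longleftrightarrow> theta (g \<circ> h) = None"
  using assms identical_comp_swap surj_monotone_linear linear_fun_comp theta_eq_None_iff
  by (metis monotone_linear_iff)

context
  fixes g h :: "real \<Rightarrow> real"
  assumes g: "monotone_linear g" "\<not> identical g" and h: "monotone_linear h" "\<not> identical h"
begin

lemma lin_vec_nonzero: "lin_vec g \<noteq> 0" "lin_vec h \<noteq> 0"
  using g h by (simp_all add: monotone_linear_iff lin_vec_eq_0_iff)

lemma theta_eq_Some_polar_angle:
  "theta g = Some (polar_angle (lin_vec g))" "theta h = Some (polar_angle (lin_vec h))"
  using lin_vec_nonzero by (simp_all add: theta_eq_vec_theta vec_theta_def)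

lemma theta_diff_in_arc2pi_0_pi_iff:
  "the (theta h) - the (theta g) \<in> arc2pi 0 pi \<longleftrightarrow> 0 < cross (lin_vec g) (lin_vec h)"
  by (simp add: theta_eq_Some_polar_angle arc2pi_0_pi_iff_sin_pos zero_less_cross_iff[OF lin_vec_nonzero])

lemma theta_diff_in_set2pi_0_pi_iff:
  "the (theta h) - the (theta g) \<in> set2pi {0, pi} \<longleftrightarrow> cross (lin_vec g) (lin_vec h) = 0"
  by (simp add: theta_eq_Some_polar_angle set2pi_0_pi_iff_sin_eq_0 cross_eq_0_iff[OF lin_vec_nonzero])

lemma theta_comp_eq_None_imp_opposite:
  assumes "theta (h \<circ> g) = None"
  shows "eq2pi (the (theta h) - the (theta g)) pi"
proof -
  have lin: "linear_fun g" "linear_fun h" and "lin_slope h > 0"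
    using g h by (simp_all add: monotone_linear_iff)
  from assms lin have "lin_slope h *\<^sub>R lin_vec g + lin_vec h = 0"
    by (simp add: theta_eq_vec_theta vec_theta_def lin_vec_comp split: if_splits)
  then have "lin_vec h = lin_slope h *\<^sub>R (- lin_vec g)"
    by (metis add.commute eq_neg_iff_add_eq_0 scaleR_minus_right)
  then have "polar_angle (lin_vec h) = polar_angle (- lin_vec g)"
    using polar_angle_scaleR[OF \<open>lin_slope h > 0\<close>, of "- lin_vec g"] lin_vec_nonzero by simp
  then show ?thesis
    using polar_angle_uminus[of "lin_vec g"] lin_vec_nonzero by (simp add: theta_eq_Some_polar_angle)
qed

context
  fixes f :: "real \<Rightarrow> real"
  assumes f: "f \<in> {h \<circ> g, g \<circ> h}"
begin

lemma theta_comp_pos_comb: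
  obtains m n where "m > 0" "n > 0" "theta f = vec_theta (m *\<^sub>R lin_vec g + n *\<^sub>R lin_vec h)"
proof -
  have lin: "linear_fun g" "linear_fun h" and "lin_slope g > 0" "lin_slope h > 0"
    using g h by (simp_all add: monotone_linear_iff)
  with f that[of "lin_slope h" 1] that[of 1 "lin_slope g"] show ?thesis
    by (auto simp: theta_eq_vec_theta lin_vec_comp add.commute)
qed

lemma theta_comp_in_arc2pi_iff:
  "(\<exists>t. theta f = Some t \<and> t \<in> arc2pi (the (theta g)) (the (theta h)))
    \<longleftrightarrow> 0 < cross (lin_vec g) (lin_vec h)"
proof -
  obtain m n where "m > 0" "n > 0" "theta f = vec_theta (m *\<^sub>R lin_vec g + n *\<^sub>R lin_vec h)"
    by (rule theta_comp_pos_comb)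
  with vec_theta_pos_comb_in_arc_iff[OF lin_vec_nonzero] show ?thesis
    by (simp add: theta_eq_Some_polar_angle)
qed

lemma theta_comp_degenerate_iff:
  "theta f \<in> {theta g, theta h, None} \<longleftrightarrow> cross (lin_vec g) (lin_vec h) = 0"
proof -
  obtain m n where "m > 0" "n > 0" "theta f = vec_theta (m *\<^sub>R lin_vec g + n *\<^sub>R lin_vec h)"
    by (rule theta_comp_pos_comb)
  with vec_theta_pos_comb_degenerate_iff[OF lin_vec_nonzero] show ?thesis
    by (simp add: theta_eq_vec_theta)
qed

lemma theta_comp_eq_if_theta_eq:
  assumes "theta h = theta g"
  shows "theta f = theta h"
proof -
  obtain m n where "m > 0" "n > 0" "theta f = vec_theta (m *\<^sub>R lin_vec g + n *\<^sub>R lin_vec h)"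
    by (rule theta_comp_pos_comb)
  moreover have "polar_angle (lin_vec g) = polar_angle (lin_vec h)"
    using assms by (simp add: theta_eq_Some_polar_angle)
  ultimately show ?thesis
    using vec_theta_pos_comb_same_angle[OF lin_vec_nonzero] assms by (simp add: theta_eq_vec_theta)
qed

end

end

theorem mainTheorem7:
  fixes g h :: "real \<Rightarrow> real"
  assumes "monotone_linear g" and "monotone_linear h"
    and "\<not> identical g" and "\<not> identical h"
  shows
   "((the (theta h) - the (theta g) \<in> arc2pi 0 pi
       \<longleftrightarrow> (\<exists>t. theta (h \<circ> g) = Some t \<and> t \<in> arc2pi (the (theta g)) (the (theta h))))
     \<and> ((\<exists>t. theta (h \<circ> g) = Some t \<and> t \<in> arc2pi (the (theta g)) (the (theta h)))
       \<longleftrightarrow> (\<exists>t. theta (g \<circ> h) = Some t \<and> t \<in> arc2pi (the (theta g)) (the (theta h)))))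
  \<and> ((the (theta h) - the (theta g) \<in> set2pi {0, pi}
       \<longleftrightarrow> theta (h \<circ> g) \<in> {theta g, theta h, None})
     \<and> (theta (h \<circ> g) \<in> {theta g, theta h, None}
       \<longleftrightarrow> theta (g \<circ> h) \<in> {theta g, theta h, None}))
  \<and> (theta h = theta g \<longrightarrow> theta (h \<circ> g) = theta h \<and> theta (g \<circ> h) = theta h)
  \<and> ((theta (h \<circ> g) = None \<longleftrightarrow> theta (g \<circ> h) = None)
     \<and> (theta (h \<circ> g) = None \<longrightarrow> eq2pi (the (theta h) - the (theta g)) pi))"
proof -
  note in_arc = theta_comp_in_arc2pi_iff[OF assms(1,3,2,4)]
    and degenerate = theta_comp_degenerate_iff[OF assms(1,3,2,4)]
    and same = theta_comp_eq_if_theta_eq[OF assms(1,3,2,4)]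
  show ?thesis
    using in_arc[of "h \<circ> g"] in_arc[of "g \<circ> h"] degenerate[of "h \<circ> g"] degenerate[of "g \<circ> h"]
      same[of "h \<circ> g"] same[of "g \<circ> h"]
      theta_diff_in_arc2pi_0_pi_iff[OF assms(1,3,2,4)] theta_diff_in_set2pi_0_pi_iff[OF assms(1,3,2,4)]
      theta_comp_eq_None_swap[OF assms(1,2)] theta_comp_eq_None_imp_opposite[OF assms(1,3,2,4)]
    by simp
qed

end
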